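(* Let $X$ be a finite set with similarity function $S$, suppose the target clustering $\mathcal{C}^{\ast}$ satisfies stability with respect to $S$, and let $\eta>0.5$. Consider the interactive process in the $\eta$-merge model with the global split and merge procedures described below. Then (a) every split performed by the split procedure is clean, and (b) every new cluster added (and labelled "pure") by the merge procedure contains points from a single target cluster.
   Context: For nonempty $A,A'\subseteq X$ let $S(A,A')$ be the average of $S(x,y)$ over $x\in A,y\in A'$. $\mathcal{C}^{\ast}=\{C^{\ast}_1,\dots,C^{\ast}_k\}$ satisfies stability w.r.t. $S$ if for all $i\neq j$, every nonempty proper $A\subset C^{\ast}_i$ and nonempty $A'\subseteq C^{\ast}_j$: $S(A,C^{\ast}_i\setminus A)>S(A,A')$. A split of a cluster $C_i$ into $C_{i,1},C_{i,2}$ is clean if both are nonempty and for each target cluster $C^{\ast}_j$ meeting $C_i$, either $C^{\ast}_j\cap C_i=C^{\ast}_j\cap C_{i,1}$ or $C^{\ast}_j\cap C_i=C^{\ast}_j\cap C_{i,2}$. Average-linkage tree $T_{glob}$: start with singletons as leaves; repeatedly merge the two current nodes $N_1,N_2$ with largest $S(N_1,N_2)$ (ties arbitrary) into parent $N_1\cup N_2$ until the root $X$ remains; nodes are identified with point sets. Process: start from an initial clustering of $X$, all clusters labelled "impure". An oracle repeatedly issues split$(C_i)$ (only if current cluster $C_i$ contains points of two or more target clusters) or merge$(C_i,C_j)$ (only if some target cluster $C^{\ast}_l$ has $|C_i\cap C^{\ast}_l|\ge\eta|C_i|$ and $|C_j\cap C^{\ast}_l|\ge\eta|C_j|$). Split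 procedure: let $N$ be the deepest node of $T_{glob}$ containing $C_i$, with children $N_1,N_2$; replace $C_i$ by $C_i\cap N_1$ and $C_i\cap N_2$, labelled "impure". Merge procedure: $\eta_1=1$ if $C_i$ is labelled "pure", else $\eta_1=\eta$; $\eta_2$ likewise for $C_j$. Find a node $N$ of $T_{glob}$ of maximal depth with $|N\cap C_i|\ge\eta_1|C_i|$ and $|N\cap C_j|\ge\eta_2|C_j|$; replace $C_i$ by $C_i\setminus N$, $C_j$ by $C_j\setminus N$ (labels kept, empty clusters discarded), and add the new cluster $N\cap(C_i\cup C_j)$ labelled "pure". *)

theory Defs
  imports Complex_Main
begin

definition avgS :: "('a \<Rightarrow> 'a \<Rightarrow> real) \<Rightarrow> 'a set \<Rightarrow> 'a set \<Rightarrow> real" where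
  "avgS S A B = (\<Sum>x\<in>A. \<Sum>y\<in>B. S x y) / (real (card A) * real (card B))"

definition is_partition :: "'a set \<Rightarrow> 'a set set \<Rightarrow> bool" where
  "is_partition X P \<longleftrightarrow> \<Union>P = X \<and> {} \<notin> P \<and> (\<forall>A\<in>P. \<forall>B\<in>P. A \<noteq> B \<longrightarrow> A \<inter> B = {})"

definition stable :: "('a \<Rightarrow> 'a \<Rightarrow> real) \<Rightarrow> 'a set set \<Rightarrow> bool" where
  "stable S Ct \<longleftrightarrow> (\<forall>Ci\<in>Ct. \<forall>Cj\<in>Ct. Ci \<noteq> Cj \<longrightarrow>
      (\<forall>A A'. A \<noteq> {} \<and> A \<subset> Ci \<and> A' \<noteq> {} \<and> A' \<subseteq> Cj \<longrightarrow>
         avgS S A (Ci - A) > avgS S A A'))"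

definition clean_split :: "'a set set \<Rightarrow> 'a set \<Rightarrow> 'a set \<Rightarrow> 'a set \<Rightarrow> bool" where
  "clean_split Ct C C1 C2 \<longleftrightarrow> C1 \<noteq> {} \<and> C2 \<noteq> {} \<and>
     (\<forall>T\<in>Ct. T \<inter> C \<noteq> {} \<longrightarrow> T \<inter> C = T \<inter> C1 \<or> T \<inter> C = T \<inter> C2)"

text \<open>A run of average linkage is a list of merges (N1,N2): at each step N1, N2 are two
  distinct current nodes maximising the average similarity (ties arbitrary).\<close>

definition avl_merge_ok :: "('a \<Rightarrow> 'a \<Rightarrow> real) \<Rightarrow> 'a set set \<Rightarrow> 'a set \<Rightarrow> 'a set \<Rightarrow> bool" where
  "avl_merge_ok S P N1 N2 \<longleftrightarrow> N1 \<in> P \<and> N2 \<in> P \<and> N1 \<noteq> N2 \<and>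
     (\<forall>M1\<in>P. \<forall>M2\<in>P. M1 \<noteq> M2 \<longrightarrow> avgS S M1 M2 \<le> avgS S N1 N2)"

fun avl_run :: "('a \<Rightarrow> 'a \<Rightarrow> real) \<Rightarrow> 'a set set \<Rightarrow> ('a set \<times> 'a set) list \<Rightarrow> 'a set set \<Rightarrow> bool" where
  "avl_run S P [] Q \<longleftrightarrow> P = Q"
| "avl_run S P ((N1, N2) # ms) Q \<longleftrightarrow>
     avl_merge_ok S P N1 N2 \<and> avl_run S (insert (N1 \<union> N2) (P - {N1, N2})) ms Q"

definition avg_linkage_tree :: "('a \<Rightarrow> 'a \<Rightarrow> real) \<Rightarrow> 'a set \<Rightarrow> ('a set \<times> 'a set) list \<Rightarrow> bool" where
  "avg_linkage_tree S X ms \<longleftrightarrow> avl_run S ((\<lambda>x. {x}) ` X) ms {X}"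

definition tree_nodes :: "'a set \<Rightarrow> ('a set \<times> 'a set) list \<Rightarrow> 'a set set" where
  "tree_nodes X ms = (\<lambda>x. {x}) ` X \<union> (\<lambda>(A, B). A \<union> B) ` set ms"

definition tree_depth :: "'a set \<Rightarrow> ('a set \<times> 'a set) list \<Rightarrow> 'a set \<Rightarrow> nat" where
  "tree_depth X ms N = card {M \<in> tree_nodes X ms. N \<subset> M}"

definition tree_children :: "('a set \<times> 'a set) list \<Rightarrow> 'a set \<Rightarrow> 'a set \<Rightarrow> 'a set \<Rightarrow> bool" where
  "tree_children ms N N1 N2 \<longleftrightarrow> (N1, N2) \<in> set ms \<and> N1 \<union> N2 = N"

definition deepest_node_containing :: "'a set \<Rightarrow> ('a set \<times> 'a set) list \<Rightarrow> 'a set \<Rightarrow> 'a set \<Rightarrow> bool" where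
  "deepest_node_containing X ms C N \<longleftrightarrow> N \<in> tree_nodes X ms \<and> C \<subseteq> N \<and>
     (\<forall>M\<in>tree_nodes X ms. C \<subseteq> M \<longrightarrow> tree_depth X ms M \<le> tree_depth X ms N)"

text \<open>State: current clusters Cs and the subset Pu of clusters labelled "pure"
  (all others are labelled "impure").\<close>

definition split_step ::
  "'a set \<Rightarrow> ('a set \<times> 'a set) list \<Rightarrow> 'a set set \<Rightarrow>
   'a set set \<Rightarrow> 'a set set \<Rightarrow> 'a set \<Rightarrow> 'a set \<Rightarrow> 'a set \<Rightarrow> 'a set set \<Rightarrow> 'a set set \<Rightarrow> bool" where
  "split_step X ms Ct Cs Pu C N1 N2 Cs' Pu' \<longleftrightarrow>
     C \<in> Cs \<and>
     (\<exists>T1\<in>Ct. \<exists>T2\<in>Ct. T1 \<noteq> T2 \<and> T1 \<inter> C \<noteq> {} \<and> T2 \<inter> C \<noteq> {}) \<and>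
     (\<exists>N. deepest_node_containing X ms C N \<and> tree_children ms N N1 N2) \<and>
     Cs' = insert (C \<inter> N1) (insert (C \<inter> N2) (Cs - {C})) \<and>
     Pu' = Pu - {C, C \<inter> N1, C \<inter> N2}"

definition merge_node_ok ::
  "'a set \<Rightarrow> ('a set \<times> 'a set) list \<Rightarrow> real \<Rightarrow> 'a set set \<Rightarrow> 'a set \<Rightarrow> 'a set \<Rightarrow> 'a set \<Rightarrow> bool" where
  "merge_node_ok X ms \<eta> Pu Ci Cj N \<longleftrightarrow>
     N \<in> tree_nodes X ms \<and>
     real (card (N \<inter> Ci)) \<ge> (if Ci \<in> Pu then 1 else \<eta>) * real (card Ci) \<and>
     real (card (N \<inter> Cj)) \<ge> (if Cj \<in> Pu then 1 else \<eta>) * real (card Cj)"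

definition merge_step ::
  "'a set \<Rightarrow> ('a set \<times> 'a set) list \<Rightarrow> 'a set set \<Rightarrow> real \<Rightarrow>
   'a set set \<Rightarrow> 'a set set \<Rightarrow> 'a set \<Rightarrow> 'a set \<Rightarrow> 'a set \<Rightarrow> 'a set set \<Rightarrow> 'a set set \<Rightarrow> bool" where
  "merge_step X ms Ct \<eta> Cs Pu Ci Cj N Cs' Pu' \<longleftrightarrow>
     Ci \<in> Cs \<and> Cj \<in> Cs \<and> Ci \<noteq> Cj \<and>
     (\<exists>T\<in>Ct. real (card (Ci \<inter> T)) \<ge> \<eta> * real (card Ci) \<and>
             real (card (Cj \<inter> T)) \<ge> \<eta> * real (card Cj)) \<and>
     merge_node_ok X ms \<eta> Pu Ci Cj N \<and>
     (\<forall>M. merge_node_ok X ms \<eta> Pu Ci Cj M \<longrightarrow> tree_depth X ms M \<le> tree_depth X ms N) \<and>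
     Cs' = (Cs - {Ci, Cj}) \<union> ({Ci - N, Cj - N} - {{}}) \<union> {N \<inter> (Ci \<union> Cj)} \<and>
     Pu' = (Pu - {Ci, Cj}) \<union>
           {D. D \<noteq> {} \<and> ((D = Ci - N \<and> Ci \<in> Pu) \<or> (D = Cj - N \<and> Cj \<in> Pu))} \<union>
           {N \<inter> (Ci \<union> Cj)}"

definition proc_step ::
  "'a set \<Rightarrow> ('a set \<times> 'a set) list \<Rightarrow> 'a set set \<Rightarrow> real \<Rightarrow>
   'a set set \<times> 'a set set \<Rightarrow> 'a set set \<times> 'a set set \<Rightarrow> bool" where
  "proc_step X ms Ct \<eta> st st' \<longleftrightarrow>
     (\<exists>C N1 N2. split_step X ms Ct (fst st) (snd st) C N1 N2 (fst st') (snd st')) \<or>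
     (\<exists>Ci Cj N. merge_step X ms Ct \<eta> (fst st) (snd st) Ci Cj N (fst st') (snd st'))"

end

theory Submission
  imports Defs
begin

text \<open>Call a set laminar to the target clustering if it lies inside one target cluster or is a
  union of target clusters. Stability forces every merge of average linkage to keep all nodes
  laminar: were two laminar nodes to merge into a non-laminar one, one of them would be a proper
  part of a target cluster avoided by the other, and stability then offers it a better partner
  inside its own target cluster. In a tree of laminar nodes, every target cluster meeting a node
  that fits in no target cluster lies entirely in one child; this makes splits clean. For a merge,
  an \<open>\<eta>\<close>-majority of both clusters in a common target cluster \<open>T\<close> (with \<open>\<eta> > 1/2\<close>) forces the
  chosen node \<open>N\<close> to meet \<open>T\<close>; if \<open>N\<close> fitted in no target cluster, the child of \<open>N\<close> containing \<open>T\<close>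
  would also pass the merge thresholds, contradicting the maximal depth of \<open>N\<close>.\<close>

definition laminar_to :: "'a set set \<Rightarrow> 'a set \<Rightarrow> bool" where
  "laminar_to Ct N \<longleftrightarrow> (\<exists>T\<in>Ct. N \<subseteq> T) \<or> (\<forall>T\<in>Ct. T \<inter> N \<noteq> {} \<longrightarrow> T \<subseteq> N)"

definition laminar_partition :: "'a set \<Rightarrow> 'a set set \<Rightarrow> 'a set set \<Rightarrow> bool" where
  "laminar_partition X Ct P \<longleftrightarrow> is_partition X P \<and> (\<forall>M\<in>P. laminar_to Ct M)"

lemma partition_eqI: "is_partition X P \<Longrightarrow> A \<in> P \<Longrightarrow> B \<in> P \<Longrightarrow> A \<inter> B \<noteq> {} \<Longrightarrow> A = B"
  unfolding is_partition_def by blast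

lemma partition_memD: "is_partition X P \<Longrightarrow> A \<in> P \<Longrightarrow> A \<noteq> {} \<and> A \<subseteq> X"
  unfolding is_partition_def by blast

lemma partition_cover: "is_partition X P \<Longrightarrow> x \<in> X \<Longrightarrow> \<exists>A\<in>P. x \<in> A"
  unfolding is_partition_def by blast

lemma partition_merge:
  assumes "is_partition X P" "N1 \<in> P" "N2 \<in> P"
  shows "is_partition X (insert (N1 \<union> N2) (P - {N1, N2}))"
proof -
  have disj: "A \<inter> B = {}" if "A \<in> P" "B \<in> P" "A \<noteq> B" for A B
    using assms(1) that unfolding is_partition_def by blast
  have "A \<inter> (N1 \<union> N2) = {}" if "A \<in> P - {N1, N2}" for A
    using disj[of A N1] disj[of A N2] that assms(2,3) by blast
  with disj assms show ?thesis
    unfolding is_partition_def by (simp add: Int_commute) blast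
qed

lemma laminar_to_singleton: "is_partition X Ct \<Longrightarrow> x \<in> X \<Longrightarrow> laminar_to Ct {x}"
  unfolding laminar_to_def using partition_cover by fastforce

lemma laminar_to_subset_target:
  assumes "laminar_to Ct M" "is_partition X Ct" "T \<in> Ct" "T \<inter> M \<noteq> {}" "\<not> T \<subseteq> M"
  shows "M \<subseteq> T"
  using assms partition_eqI[OF assms(2) _ assms(3)] unfolding laminar_to_def by blast

lemma laminar_to_target_in_part:
  assumes Ct: "is_partition X Ct" and "laminar_to Ct A" "laminar_to Ct B"
    and T: "T \<in> Ct" "T \<subseteq> A \<union> B" "\<not> A \<union> B \<subseteq> T"
  shows "T \<subseteq> A \<or> T \<subseteq> B"
proof (rule ccontr)
  assume "\<not> (T \<subseteq> A \<or> T \<subseteq> B)"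
  then have "T \<inter> A \<noteq> {}" "T \<inter> B \<noteq> {}" using T(2) by blast+
  with assms \<open>\<not> (T \<subseteq> A \<or> T \<subseteq> B)\<close> have "A \<subseteq> T" "B \<subseteq> T"
    using laminar_to_subset_target by blast+
  with T(3) show False by blast
qed

lemma laminar_to_Un_strict:
  assumes Ct: "is_partition X Ct" and lA: "laminar_to Ct A" and lB: "laminar_to Ct B"
    and disj: "A \<inter> B = {}" and "A \<noteq> {}"
    and not_union: "\<not> (\<forall>T\<in>Ct. T \<inter> A \<noteq> {} \<longrightarrow> T \<subseteq> A)" and not_lam: "\<not> laminar_to Ct (A \<union> B)"
  shows "\<exists>T\<in>Ct. A \<subset> T \<and> B \<inter> T = {}"
proof -
  obtain T where T: "T \<in> Ct" "A \<subseteq> T" using lA not_union unfolding laminar_to_def by blast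
  have "A \<noteq> T"
    using not_union partition_eqI[OF Ct _ T(1)] by blast
  moreover have "B \<inter> T = {}"
  proof (rule ccontr)
    assume BT: "B \<inter> T \<noteq> {}"
    show False
    proof (cases "\<exists>T'\<in>Ct. B \<subseteq> T'")
      case True
      then obtain T' where "T' \<in> Ct" "B \<subseteq> T'" by blast
      with BT have "T' = T" using partition_eqI[OF Ct _ T(1)] by blast
      with \<open>B \<subseteq> T'\<close> T not_lam show False unfolding laminar_to_def by blast
    next
      case False
      then have "T \<subseteq> B" using lB BT T(1) unfolding laminar_to_def by blast
      with T(2) disj \<open>A \<noteq> {}\<close> show False by blast
    qed
  qed
  ultimately show ?thesis using T by blast
qed

lemma laminar_to_Un:
  assumes Ct: "is_partition X Ct" and lA: "laminar_to Ct A" and lB: "laminar_to Ct B"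
    and disj: "A \<inter> B = {}" and ne: "A \<noteq> {}" "B \<noteq> {}" and not_lam: "\<not> laminar_to Ct (A \<union> B)"
  shows "(\<exists>T\<in>Ct. A \<subset> T \<and> B \<inter> T = {}) \<or> (\<exists>T\<in>Ct. B \<subset> T \<and> A \<inter> T = {})"
proof (cases "\<forall>T\<in>Ct. T \<inter> A \<noteq> {} \<longrightarrow> T \<subseteq> A")
  case True
  with not_lam have "\<not> (\<forall>T\<in>Ct. T \<inter> B \<noteq> {} \<longrightarrow> T \<subseteq> B)"
    unfolding laminar_to_def by blast
  moreover have "\<not> laminar_to Ct (B \<union> A)" "B \<inter> A = {}"
    using not_lam disj by (auto simp: Un_commute)
  ultimately have "\<exists>T\<in>Ct. B \<subset> T \<and> A \<inter> T = {}"
    using laminar_to_Un_strict[OF Ct lB lA _ ne(2)] by simp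
  then show ?thesis ..
next
  case False
  then have "\<exists>T\<in>Ct. A \<subset> T \<and> B \<inter> T = {}"
    using laminar_to_Un_strict[OF Ct lA lB disj ne(1)] not_lam by simp
  then show ?thesis ..
qed

lemma avgS_sym:
  assumes "\<forall>x\<in>X. \<forall>y\<in>X. S x y = S y x" "A \<subseteq> X" "B \<subseteq> X"
  shows "avgS S A B = avgS S B A"
proof -
  have "(\<Sum>x\<in>A. \<Sum>y\<in>B. S x y) = (\<Sum>y\<in>B. \<Sum>x\<in>A. S y x)"
    using assms by (subst sum.swap) (auto intro!: sum.cong)
  then show ?thesis unfolding avgS_def by (simp add: mult.commute)
qed

lemma avgS_mult_card: "avgS S A M * real (card M) = (\<Sum>x\<in>A. \<Sum>y\<in>M. S x y) / real (card A)"
  by (cases "card M = 0") (auto simp: avgS_def card_eq_0_iff)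

lemma avgS_Union:
  assumes "finite F" "\<forall>M\<in>F. finite M" "pairwise disjnt F"
  shows "avgS S A (\<Union>F) * real (card (\<Union>F)) = (\<Sum>M\<in>F. avgS S A M * real (card M))"
proof -
  have "(\<Sum>x\<in>A. \<Sum>y\<in>\<Union>F. S x y) = (\<Sum>x\<in>A. \<Sum>M\<in>F. \<Sum>y\<in>M. S x y)"
    using assms by (intro sum.cong refl)
      (simp add: sum.Union_disjoint pairwise_def disjnt_def)
  also have "\<dots> = (\<Sum>M\<in>F. \<Sum>x\<in>A. \<Sum>y\<in>M. S x y)" by (rule sum.swap)
  finally show ?thesis
    by (simp add: avgS_mult_card sum_divide_distrib)
qed

lemma avgS_Union_le:
  assumes "finite F" "\<forall>M\<in>F. finite M" "pairwise disjnt F" "\<Union>F \<noteq> {}"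
    and le: "\<forall>M\<in>F. avgS S A M \<le> d"
  shows "avgS S A (\<Union>F) \<le> d"
proof -
  have "avgS S A (\<Union>F) * real (card (\<Union>F)) \<le> (\<Sum>M\<in>F. d * real (card M))"
    unfolding avgS_Union[OF assms(1-3)] using le by (intro sum_mono mult_right_mono) auto
  also have "\<dots> = d * real (card (\<Union>F))"
    using assms(1-3) by (simp add: card_Union_disjoint sum_distrib_left)
  finally show ?thesis
    using assms(1,2,4) by (simp add: card_gt_0_iff)
qed

lemma avgS_Union_less:
  assumes "finite F" "\<forall>M\<in>F. finite M \<and> M \<noteq> {}" "pairwise disjnt F" "F \<noteq> {}"
    and less: "\<forall>M\<in>F. avgS S A M < d"
  shows "avgS S A (\<Union>F) < d"
proof -
  have fin: "\<forall>M\<in>F. finite M" using assms(2) by blast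
  have "avgS S A (\<Union>F) * real (card (\<Union>F)) < (\<Sum>M\<in>F. d * real (card M))"
    unfolding avgS_Union[OF assms(1) fin assms(3)] using assms(1,2,4,5)
    by (intro sum_strict_mono mult_strict_right_mono) (auto simp: card_gt_0_iff)
  also have "\<dots> = d * real (card (\<Union>F))"
    using assms(1-3) by (simp add: card_Union_disjoint sum_distrib_left)
  finally show ?thesis
    using assms by (simp add: card_gt_0_iff)
qed

lemma laminar_partition_fills_target:
  assumes Ct: "is_partition X Ct" and P: "laminar_partition X Ct P"
    and A: "A \<in> P" "A \<noteq> {}" and T: "T \<in> Ct" "A \<subset> T"
  shows "\<Union>{M\<in>P. M \<subseteq> T - A} = T - A"
proof
  have P_part: "is_partition X P" using P unfolding laminar_partition_def ..
  show "T - A \<subseteq> \<Union>{M\<in>P. M \<subseteq> T - A}"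
  proof
    fix y assume y: "y \<in> T - A"
    then have "y \<in> X" using partition_memD[OF Ct T(1)] by blast
    then obtain M where M: "M \<in> P" "y \<in> M" using partition_cover[OF P_part] by blast
    have MA: "M \<inter> A = {}" using partition_eqI[OF P_part M(1) A(1)] M(2) y by blast
    have "M \<subseteq> T"
    proof (cases "T \<subseteq> M")
      case True
      with MA T(2) A(2) show ?thesis by blast
    next
      case False
      moreover have "laminar_to Ct M" using P M(1) unfolding laminar_partition_def by blast
      moreover have "T \<inter> M \<noteq> {}" using M(2) y by blast
      ultimately show ?thesis using laminar_to_subset_target[OF _ Ct T(1)] by blast
    qed
    with M MA show "y \<in> \<Union>{M\<in>P. M \<subseteq> T - A}" by blast
  qed
qed auto

lemma stable_prefers_block_in_target:
  assumes X: "finite X" and Ct: "is_partition X Ct" and st: "stable S Ct"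
    and T: "T \<in> Ct" "A \<subset> T" and "A \<noteq> {}"
    and B: "B \<noteq> {}" "B \<subseteq> X" "B \<inter> T = {}"
    and P: "laminar_partition X Ct P" "A \<in> P"
  shows "\<exists>M\<in>P. M \<noteq> A \<and> avgS S A B < avgS S A M"
proof (rule ccontr)
  assume no_better: "\<not> ?thesis"
  define F where "F = {M\<in>P. M \<subseteq> T - A}"
  have P_part: "is_partition X P" using P(1) unfolding laminar_partition_def ..
  have "finite P"
    using P_part X by (intro finite_subset[of P "Pow X"]) (auto simp: is_partition_def)
  then have "finite F" unfolding F_def by simp
  moreover have "\<forall>M\<in>F. finite M"
    unfolding F_def using partition_memD[OF P_part] X finite_subset by blast
  moreover have "pairwise disjnt F"
    unfolding F_def pairwise_def disjnt_def using partition_eqI[OF P_part] by blast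
  moreover have UF: "\<Union>F = T - A"
    unfolding F_def by (rule laminar_partition_fills_target[OF Ct P(1) P(2) \<open>A \<noteq> {}\<close> T])
  moreover have "\<forall>M\<in>F. avgS S A M \<le> avgS S A B"
    using no_better \<open>A \<noteq> {}\<close> unfolding F_def by fastforce
  ultimately have "avgS S A (T - A) \<le> avgS S A B"
    using avgS_Union_le[of F S A] T(2) by force
  moreover have "avgS S A B < avgS S A (T - A)"
  proof -
    have "avgS S A {y} < avgS S A (T - A)" if yB: "y \<in> B" for y
    proof -
      obtain T' where "T' \<in> Ct" "y \<in> T'" using partition_cover[OF Ct] B(2) yB by blast
      moreover have "T' \<noteq> T" using B(3) yB \<open>y \<in> T'\<close> by blast
      ultimately show ?thesis
        using st T \<open>A \<noteq> {}\<close> unfolding stable_def by blast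
    qed
    moreover have "finite B" using B(2) X finite_subset by blast
    ultimately have "avgS S A (\<Union>((\<lambda>y. {y}) ` B)) < avgS S A (T - A)"
      using B(1) by (intro avgS_Union_less) (auto simp: pairwise_def disjnt_def)
    then show ?thesis by simp
  qed
  ultimately show False by simp
qed

lemma avl_merge_laminar:
  assumes X: "finite X" and sym: "\<forall>x\<in>X. \<forall>y\<in>X. S x y = S y x"
    and Ct: "is_partition X Ct" and st: "stable S Ct"
    and P: "laminar_partition X Ct P" and merge: "avl_merge_ok S P N1 N2"
  shows "laminar_to Ct (N1 \<union> N2)"
proof (rule ccontr)
  assume not_lam: "\<not> laminar_to Ct (N1 \<union> N2)"
  have N: "N1 \<in> P" "N2 \<in> P" "N1 \<noteq> N2"
    and best: "\<forall>M1\<in>P. \<forall>M2\<in>P. M1 \<noteq> M2 \<longrightarrow> avgS S M1 M2 \<le> avgS S N1 N2"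
    using merge unfolding avl_merge_ok_def by auto
  have P_part: "is_partition X P" and lam: "laminar_to Ct N1" "laminar_to Ct N2"
    using P N unfolding laminar_partition_def by auto
  have ne: "N1 \<noteq> {}" "N2 \<noteq> {}" and sub: "N1 \<subseteq> X" "N2 \<subseteq> X"
    using partition_memD[OF P_part] N by auto
  have disj: "N1 \<inter> N2 = {}" using partition_eqI[OF P_part N(1,2)] N(3) by auto
  have sym_N: "avgS S N2 N1 = avgS S N1 N2" using avgS_sym[OF sym sub(2,1)] .
  from laminar_to_Un[OF Ct lam disj ne not_lam] show False
  proof (elim disjE bexE conjE)
    fix T assume T: "T \<in> Ct" "N1 \<subset> T" "N2 \<inter> T = {}"
    obtain M where M: "M \<in> P" "M \<noteq> N1" "avgS S N1 N2 < avgS S N1 M"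
      using stable_prefers_block_in_target[OF X Ct st T(1,2) ne sub(2) T(3) P N(1)] by blast
    have "avgS S N1 M \<le> avgS S N1 N2" using best N(1) M(1,2) by metis
    with M(3) show False by simp
  next
    fix T assume T: "T \<in> Ct" "N2 \<subset> T" "N1 \<inter> T = {}"
    obtain M where M: "M \<in> P" "M \<noteq> N2" "avgS S N2 N1 < avgS S N2 M"
      using stable_prefers_block_in_target[OF X Ct st T(1,2) ne(2,1) sub(1) T(3) P N(2)] by blast
    have "avgS S N2 M \<le> avgS S N1 N2" using best N(2) M(1,2) by metis
    with M(3) sym_N show False by simp
  qed
qed

lemma avl_run_invariant:
  assumes "avl_run S P ms Q" "I P"
    and step: "\<And>P N1 N2. I P \<Longrightarrow> avl_merge_ok S P N1 N2 \<Longrightarrow> I (insert (N1 \<union> N2) (P - {N1, N2}))"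
  shows "I Q"
  using assms(1,2)
proof (induction ms arbitrary: P)
  case (Cons m ms)
  obtain M1 M2 where m: "m = (M1, M2)" by (cases m)
  with Cons.prems step show ?case
    using Cons.IH[of "insert (M1 \<union> M2) (P - {M1, M2})"] by simp
qed simp

lemma avl_run_subset_nodes: "avl_run S P ms Q \<Longrightarrow> Q \<subseteq> P \<union> (\<lambda>(A, B). A \<union> B) ` set ms"
proof (induction ms arbitrary: P)
  case (Cons m ms)
  obtain M1 M2 where m: "m = (M1, M2)" by (cases m)
  with Cons.prems have "Q \<subseteq> insert (M1 \<union> M2) (P - {M1, M2}) \<union> (\<lambda>(A, B). A \<union> B) ` set ms"
    using Cons.IH[of "insert (M1 \<union> M2) (P - {M1, M2})"] by simp
  with m show ?case by auto
qed simp

lemma avl_run_merge_state: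
  "avl_run S P ms Q \<Longrightarrow> (N1, N2) \<in> set ms \<Longrightarrow>
    \<exists>ms' P'. set ms' \<subseteq> set ms \<and> avl_run S P ms' P' \<and> avl_merge_ok S P' N1 N2"
proof (induction ms arbitrary: P)
  case (Cons m ms)
  obtain M1 M2 where m: "m = (M1, M2)" by (cases m)
  show ?case
  proof (cases "m = (N1, N2)")
    case True
    with Cons.prems m show ?thesis by (intro exI[of _ "[]"] exI[of _ P]) simp
  next
    case False
    with Cons.prems m obtain ms' P' where "set ms' \<subseteq> set ms"
      "avl_run S (insert (M1 \<union> M2) (P - {M1, M2})) ms' P'" "avl_merge_ok S P' N1 N2"
      using Cons.IH[of "insert (M1 \<union> M2) (P - {M1, M2})"] by auto
    with Cons.prems m show ?thesis by (intro exI[of _ "m # ms'"] exI[of _ P']) auto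
  qed
qed simp

lemma avg_linkage_tree_merge_state:
  assumes X: "finite X" and sym: "\<forall>x\<in>X. \<forall>y\<in>X. S x y = S y x"
    and Ct: "is_partition X Ct" and st: "stable S Ct"
    and tree: "avg_linkage_tree S X ms" and mem: "(N1, N2) \<in> set ms"
  shows "\<exists>P. laminar_partition X Ct P \<and> P \<subseteq> tree_nodes X ms \<and> avl_merge_ok S P N1 N2"
proof -
  let ?P0 = "(\<lambda>x. {x}) ` X"
  have "avl_run S ?P0 ms {X}" using tree unfolding avg_linkage_tree_def .
  then obtain ms' P where ms': "set ms' \<subseteq> set ms" "avl_run S ?P0 ms' P" "avl_merge_ok S P N1 N2"
    using avl_run_merge_state[OF _ mem] by blast
  have "is_partition X ?P0" unfolding is_partition_def by auto
  moreover have "\<forall>M\<in>?P0. laminar_to Ct M" using laminar_to_singleton[OF Ct] by blast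
  ultimately have "laminar_partition X Ct ?P0" unfolding laminar_partition_def ..
  then have "laminar_partition X Ct P"
  proof (rule avl_run_invariant[OF ms'(2)])
    fix P N1 N2 assume P: "laminar_partition X Ct P" and merge: "avl_merge_ok S P N1 N2"
    then show "laminar_partition X Ct (insert (N1 \<union> N2) (P - {N1, N2}))"
      using partition_merge avl_merge_laminar[OF X sym Ct st P merge]
      unfolding laminar_partition_def avl_merge_ok_def by auto
  qed
  moreover have "P \<subseteq> ?P0 \<union> (\<lambda>(A, B). A \<union> B) ` set ms'" by (rule avl_run_subset_nodes[OF ms'(2)])
  then have "P \<subseteq> tree_nodes X ms"
    unfolding tree_nodes_def using image_mono[OF ms'(1)] by (meson Un_mono order_trans subset_refl)
  ultimately show ?thesis using ms'(3) by blast
qed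

locale laminar_linkage_tree =
  fixes X :: "'a set" and ms :: "('a set \<times> 'a set) list" and Ct :: "'a set set"
  assumes finite_X: "finite X"
    and target_partition: "is_partition X Ct"
    and node_laminar: "N \<in> tree_nodes X ms \<Longrightarrow> N \<noteq> {} \<and> laminar_to Ct N"
    and child_nodes: "(N1, N2) \<in> set ms \<Longrightarrow>
      N1 \<in> tree_nodes X ms \<and> N2 \<in> tree_nodes X ms \<and> N1 \<inter> N2 = {}"

lemma avg_linkage_tree_laminar:
  assumes X: "finite X" and sym: "\<forall>x\<in>X. \<forall>y\<in>X. S x y = S y x"
    and Ct: "is_partition X Ct" and st: "stable S Ct" and tree: "avg_linkage_tree S X ms"
  shows "laminar_linkage_tree X ms Ct"
proof
  note merge_state = avg_linkage_tree_merge_state[OF X sym Ct st tree]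
  show "finite X" by (rule X)
  show "is_partition X Ct" by (rule Ct)
  fix N assume "N \<in> tree_nodes X ms"
  then consider x where "x \<in> X" "N = {x}" | N1 N2 where "(N1, N2) \<in> set ms" "N = N1 \<union> N2"
    unfolding tree_nodes_def by auto
  then show "N \<noteq> {} \<and> laminar_to Ct N"
  proof cases
    case 1
    then show ?thesis using laminar_to_singleton[OF Ct] by simp
  next
    case (2 N1 N2)
    then obtain P where P: "laminar_partition X Ct P" and merge: "avl_merge_ok S P N1 N2"
      using merge_state by blast
    have "N1 \<noteq> {}"
      using partition_memD[of X P N1] P merge unfolding laminar_partition_def avl_merge_ok_def by simp
    then show ?thesis using 2 avl_merge_laminar[OF X sym Ct st P merge] by simp
  qed
next
  fix N1 N2 assume "(N1, N2) \<in> set ms"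
  then obtain P where P: "laminar_partition X Ct P" "P \<subseteq> tree_nodes X ms" "avl_merge_ok S P N1 N2"
    using avg_linkage_tree_merge_state[OF X sym Ct st tree] by blast
  then have N: "N1 \<in> P" "N2 \<in> P" "N1 \<noteq> N2" unfolding avl_merge_ok_def by auto
  have "is_partition X P" using P(1) unfolding laminar_partition_def ..
  then have "N1 \<inter> N2 = {}" using partition_eqI[of X P N1 N2] N by auto
  with N P(2) show "N1 \<in> tree_nodes X ms \<and> N2 \<in> tree_nodes X ms \<and> N1 \<inter> N2 = {}" by auto
qed

lemma card_majorities_meet:
  assumes "finite C" "A \<subseteq> C" "B \<subseteq> C"
    and "real (card A) > real (card C) / 2" "real (card B) > real (card C) / 2"
  shows "A \<inter> B \<noteq> {}"
proof
  assume disj: "A \<inter> B = {}"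
  have "finite A" "finite B" using assms(1-3) finite_subset by auto
  then have "card A + card B = card (A \<union> B)" using disj by (simp add: card_Un_disjoint)
  also have "\<dots> \<le> card C" using assms(1-3) by (intro card_mono) auto
  finally show False using assms(4,5) by linarith
qed

lemma card_gt_half_if_ge_fraction:
  assumes "finite C" "C \<noteq> {}" "\<theta> > 1/2" "real (card D) \<ge> \<theta> * real (card C)"
  shows "real (card D) > real (card C) / 2"
proof -
  have "real (card C) > 0" using assms(1,2) by (simp add: card_gt_0_iff)
  then have "1/2 * real (card C) < \<theta> * real (card C)"
    using assms(3) by (rule mult_strict_right_mono[rotated])
  with assms(4) show ?thesis by linarith
qed

lemma merge_threshold_meets_majority:
  assumes C: "finite C" "C \<noteq> {}" and "\<eta> > 1/2"
    and major: "real (card (C \<inter> T)) \<ge> \<eta> * real (card C)"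
    and threshold: "real (card (N \<inter> C)) \<ge> (if C \<in> Pu then 1 else \<eta>) * real (card C)"
  shows "N \<inter> C \<inter> T \<noteq> {}"
proof -
  have "(if C \<in> Pu then 1 else \<eta>) > 1/2" using \<open>\<eta> > 1/2\<close> by simp
  then have "real (card (N \<inter> C)) > real (card C) / 2"
    using card_gt_half_if_ge_fraction[OF C _ threshold] by blast
  moreover have "real (card (C \<inter> T)) > real (card C) / 2"
    using card_gt_half_if_ge_fraction[OF C \<open>\<eta> > 1/2\<close> major] .
  ultimately have "(N \<inter> C) \<inter> (C \<inter> T) \<noteq> {}"
    by (intro card_majorities_meet[OF C(1)]) auto
  then show ?thesis by blast
qed

lemma merge_threshold_superset:
  assumes Ct: "is_partition X Ct" and T: "T \<in> Ct" "T \<subseteq> A"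
    and C: "finite C" "C \<noteq> {}" and "\<eta> > 1/2"
    and major: "real (card (C \<inter> T)) \<ge> \<eta> * real (card C)"
    and pure: "C \<in> Pu \<Longrightarrow> \<exists>T'\<in>Ct. C \<subseteq> T'"
  shows "real (card (A \<inter> C)) \<ge> (if C \<in> Pu then 1 else \<eta>) * real (card C)"
proof (cases "C \<in> Pu")
  case True
  then obtain T' where T': "T' \<in> Ct" "C \<subseteq> T'" using pure by blast
  have "real (card (C \<inter> T)) > real (card C) / 2"
    using card_gt_half_if_ge_fraction[OF C \<open>\<eta> > 1/2\<close> major] .
  then have "C \<inter> T \<noteq> {}" by auto
  then have "T' = T" using partition_eqI[OF Ct T'(1) T(1)] T'(2) by blast
  with T'(2) T(2) have "A \<inter> C = C" by blast
  with True show ?thesis by simp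
next
  case False
  have "card (C \<inter> T) \<le> card (A \<inter> C)" using C(1) T(2) by (intro card_mono) auto
  with False major show ?thesis by simp
qed

context laminar_linkage_tree
begin

lemma finite_tree_nodes: "finite (tree_nodes X ms)"
  unfolding tree_nodes_def using finite_X by simp

lemma tree_depth_less:
  assumes "M \<in> tree_nodes X ms" "N \<in> tree_nodes X ms" "M \<subset> N"
  shows "tree_depth X ms N < tree_depth X ms M"
  unfolding tree_depth_def
proof (rule psubset_card_mono)
  show "finite {K \<in> tree_nodes X ms. M \<subset> K}" using finite_tree_nodes by simp
  show "{K \<in> tree_nodes X ms. N \<subset> K} \<subset> {K \<in> tree_nodes X ms. M \<subset> K}"
    using assms by auto
qed

lemma tree_children_psubset:
  assumes "tree_children ms N N1 N2"
  shows "N1 \<in> tree_nodes X ms" "N2 \<in> tree_nodes X ms" "N1 \<subset> N" "N2 \<subset> N"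
proof -
  have "(N1, N2) \<in> set ms" "N = N1 \<union> N2" using assms unfolding tree_children_def by auto
  with child_nodes node_laminar show "N1 \<in> tree_nodes X ms" "N2 \<in> tree_nodes X ms" "N1 \<subset> N" "N2 \<subset> N"
    by blast+
qed

lemma deepest_node_not_in_child:
  assumes "deepest_node_containing X ms C N" "tree_children ms N N1 N2"
  shows "C \<inter> N1 \<noteq> {}" "C \<inter> N2 \<noteq> {}"
proof -
  have N: "N \<in> tree_nodes X ms" "C \<subseteq> N"
    and deepest: "\<And>M. M \<in> tree_nodes X ms \<Longrightarrow> C \<subseteq> M \<Longrightarrow> tree_depth X ms M \<le> tree_depth X ms N"
    using assms(1) unfolding deepest_node_containing_def by auto
  have N_eq: "N = N1 \<union> N2" using assms(2) unfolding tree_children_def by simp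
  note child = tree_children_psubset[OF assms(2)]
  show "C \<inter> N1 \<noteq> {}"
  proof
    assume "C \<inter> N1 = {}"
    then have "C \<subseteq> N2" using N(2) N_eq by blast
    with deepest[OF child(2)] tree_depth_less[OF child(2) N(1) child(4)] show False by simp
  qed
  show "C \<inter> N2 \<noteq> {}"
  proof
    assume "C \<inter> N2 = {}"
    then have "C \<subseteq> N1" using N(2) N_eq by blast
    with deepest[OF child(1)] tree_depth_less[OF child(1) N(1) child(3)] show False by simp
  qed
qed

lemma node_outside_targets_has_children:
  assumes "N \<in> tree_nodes X ms" "\<forall>T\<in>Ct. \<not> N \<subseteq> T"
  shows "\<exists>N1 N2. tree_children ms N N1 N2"
proof -
  have "N \<notin> (\<lambda>x. {x}) ` X" using assms(2) partition_cover[OF target_partition] by blast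
  with assms(1) show ?thesis unfolding tree_nodes_def tree_children_def by auto
qed

lemma target_in_child:
  assumes children: "tree_children ms N N1 N2" and T: "T \<in> Ct" "T \<inter> N \<noteq> {}"
    and outside: "\<forall>T'\<in>Ct. \<not> N \<subseteq> T'"
  shows "T \<subseteq> N1 \<or> T \<subseteq> N2"
proof -
  note child = tree_children_psubset[OF children]
  have N_eq: "N = N1 \<union> N2" using children unfolding tree_children_def by simp
  have "N \<in> tree_nodes X ms" using children unfolding tree_children_def tree_nodes_def by force
  with T outside have "T \<subseteq> N" using node_laminar unfolding laminar_to_def by blast
  moreover have "\<not> N \<subseteq> T" using outside T(1) by blast
  ultimately show ?thesis
    using laminar_to_target_in_part[OF target_partition _ _ T(1)] node_laminar child(1,2) N_eq
    by blast
qed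

lemma split_step_clean:
  assumes "split_step X ms Ct Cs Pu C N1 N2 Cs' Pu'"
  shows "clean_split Ct C (C \<inter> N1) (C \<inter> N2)"
proof -
  obtain T1 T2 where T12: "T1 \<in> Ct" "T2 \<in> Ct" "T1 \<noteq> T2" "T1 \<inter> C \<noteq> {}" "T2 \<inter> C \<noteq> {}"
    using assms unfolding split_step_def by blast
  obtain N where deepest: "deepest_node_containing X ms C N" and children: "tree_children ms N N1 N2"
    using assms unfolding split_step_def by blast
  have CN: "C \<subseteq> N" using deepest unfolding deepest_node_containing_def by blast
  have outside: "\<forall>T\<in>Ct. \<not> N \<subseteq> T"
  proof (intro ballI notI)
    fix T assume "T \<in> Ct" "N \<subseteq> T"
    with T12 CN have "T1 = T" "T2 = T" using partition_eqI[OF target_partition] by blast+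
    with T12(3) show False by simp
  qed
  have "T \<inter> C = T \<inter> (C \<inter> N1) \<or> T \<inter> C = T \<inter> (C \<inter> N2)"
    if "T \<in> Ct" "T \<inter> C \<noteq> {}" for T
    using target_in_child[OF children that(1) _ outside] that(2) CN by blast
  then show ?thesis
    using deepest_node_not_in_child[OF deepest children] unfolding clean_split_def by blast
qed

lemma merge_step_pure:
  assumes "\<eta> > 1/2" and clusters: "\<forall>C\<in>Cs. C \<noteq> {} \<and> C \<subseteq> X"
    and pure: "\<forall>C\<in>Pu. \<exists>T\<in>Ct. C \<subseteq> T"
    and step: "merge_step X ms Ct \<eta> Cs Pu Ci Cj N Cs' Pu'"
  shows "N \<inter> (Ci \<union> Cj) \<noteq> {} \<and> (\<exists>T\<in>Ct. N \<inter> (Ci \<union> Cj) \<subseteq> T)"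
proof -
  obtain T where T: "T \<in> Ct" "real (card (Ci \<inter> T)) \<ge> \<eta> * real (card Ci)"
    "real (card (Cj \<inter> T)) \<ge> \<eta> * real (card Cj)"
    using step unfolding merge_step_def by blast
  have ok: "merge_node_ok X ms \<eta> Pu Ci Cj N"
    and deepest: "\<And>M. merge_node_ok X ms \<eta> Pu Ci Cj M \<Longrightarrow> tree_depth X ms M \<le> tree_depth X ms N"
    and C: "Ci \<in> Cs" "Cj \<in> Cs"
    using step unfolding merge_step_def by auto
  have ne: "Ci \<noteq> {}" "Cj \<noteq> {}" and "Ci \<subseteq> X" "Cj \<subseteq> X" using C clusters by auto
  then have fin: "finite Ci" "finite Cj" using finite_X finite_subset by auto
  have meet: "N \<inter> Ci \<inter> T \<noteq> {}"
    using ok merge_threshold_meets_majority[OF fin(1) ne(1) \<open>\<eta> > 1/2\<close> T(2)]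
    unfolding merge_node_ok_def by blast
  have "\<exists>T'\<in>Ct. N \<subseteq> T'"
  proof (rule ccontr)
    assume outside: "\<not> (\<exists>T'\<in>Ct. N \<subseteq> T')"
    have "N \<in> tree_nodes X ms" using ok unfolding merge_node_ok_def by blast
    then obtain A B where children: "tree_children ms N A B"
      using node_outside_targets_has_children outside by blast
    note child = tree_children_psubset[OF children]
    have "T \<inter> N \<noteq> {}" using meet by blast
    then obtain Q where Q: "Q \<in> tree_nodes X ms" "Q \<subset> N" "T \<subseteq> Q"
      using target_in_child[OF children T(1)] outside child by blast
    have "real (card (Q \<inter> Ci)) \<ge> (if Ci \<in> Pu then 1 else \<eta>) * real (card Ci)"
      using pure by (intro merge_threshold_superset[OF target_partition T(1) Q(3) fin(1) ne(1)
          \<open>\<eta> > 1/2\<close> T(2)]) auto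
    moreover have "real (card (Q \<inter> Cj)) \<ge> (if Cj \<in> Pu then 1 else \<eta>) * real (card Cj)"
      using pure by (intro merge_threshold_superset[OF target_partition T(1) Q(3) fin(2) ne(2)
          \<open>\<eta> > 1/2\<close> T(3)]) auto
    ultimately have "merge_node_ok X ms \<eta> Pu Ci Cj Q"
      unfolding merge_node_ok_def using Q(1) by blast
    with deepest tree_depth_less[OF Q(1) _ Q(2)] \<open>N \<in> tree_nodes X ms\<close> show False
      by (meson not_le)
  qed
  with meet show ?thesis by blast
qed

text \<open>The analysis never needs the current clusters to form a partition of \<open>X\<close>, only to be
  nonempty subsets of it.\<close>

definition sound_state :: "'a set set \<Rightarrow> 'a set set \<Rightarrow> bool" where
  "sound_state Cs Pu \<longleftrightarrow> (\<forall>C\<in>Cs. C \<noteq> {} \<and> C \<subseteq> X) \<and> (\<forall>C\<in>Pu. \<exists>T\<in>Ct. C \<subseteq> T)"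

lemma split_step_sound:
  assumes "sound_state Cs Pu" "split_step X ms Ct Cs Pu C N1 N2 Cs' Pu'"
  shows "sound_state Cs' Pu'"
  using assms split_step_clean[OF assms(2)]
  unfolding sound_state_def split_step_def clean_split_def by blast

lemma merge_step_sound:
  assumes "\<eta> > 1/2" and sound: "sound_state Cs Pu"
    and step: "merge_step X ms Ct \<eta> Cs Pu Ci Cj N Cs' Pu'"
  shows "sound_state Cs' Pu'"
proof -
  have clusters: "\<forall>C\<in>Cs. C \<noteq> {} \<and> C \<subseteq> X" and pure: "\<forall>C\<in>Pu. \<exists>T\<in>Ct. C \<subseteq> T"
    using sound unfolding sound_state_def by auto
  have new: "N \<inter> (Ci \<union> Cj) \<noteq> {}" "\<exists>T\<in>Ct. N \<inter> (Ci \<union> Cj) \<subseteq> T"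
    using merge_step_pure[OF assms(1) clusters pure step] by auto
  have C: "Ci \<in> Cs" "Cj \<in> Cs"
    and Cs': "Cs' = (Cs - {Ci, Cj}) \<union> ({Ci - N, Cj - N} - {{}}) \<union> {N \<inter> (Ci \<union> Cj)}"
    and Pu': "Pu' = (Pu - {Ci, Cj}) \<union>
      {D. D \<noteq> {} \<and> ((D = Ci - N \<and> Ci \<in> Pu) \<or> (D = Cj - N \<and> Cj \<in> Pu))} \<union>
      {N \<inter> (Ci \<union> Cj)}"
    using step unfolding merge_step_def by auto
  have "Ci \<subseteq> X" "Cj \<subseteq> X" using C clusters by auto
  then have "\<forall>C\<in>Cs'. C \<noteq> {} \<and> C \<subseteq> X" using clusters new(1) unfolding Cs' by blast
  moreover have "\<forall>C\<in>Pu'. \<exists>T\<in>Ct. C \<subseteq> T"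
  proof
    fix D assume "D \<in> Pu'"
    then consider "D \<in> Pu" | "D \<subseteq> Ci" "Ci \<in> Pu" | "D \<subseteq> Cj" "Cj \<in> Pu" | "D = N \<inter> (Ci \<union> Cj)"
      unfolding Pu' by blast
    then show "\<exists>T\<in>Ct. D \<subseteq> T"
    proof cases
      case 2
      then show ?thesis using pure by (meson subset_trans)
    next
      case 3
      then show ?thesis using pure by (meson subset_trans)
    qed (use pure new(2) in simp_all)
  qed
  ultimately show ?thesis unfolding sound_state_def ..
qed

lemma proc_steps_sound:
  assumes "\<eta> > 1/2" "(proc_step X ms Ct \<eta>)\<^sup>*\<^sup>* st st'" "sound_state (fst st) (snd st)"
  shows "sound_state (fst st') (snd st')"
  using assms(2,3)
proof (induction rule: rtranclp_induct)
  case (step st' st'')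
  then show ?case
    using split_step_sound merge_step_sound[OF assms(1)] unfolding proc_step_def by blast
qed

end

theorem lemma13:
  fixes X :: "'a set" and S :: "'a \<Rightarrow> 'a \<Rightarrow> real" and Ct :: "'a set set" and \<eta> :: real
    and ms :: "('a set \<times> 'a set) list" and Cs0 Cs Pu :: "'a set set"
  assumes "finite X"
    and "\<forall>x\<in>X. \<forall>y\<in>X. S x y = S y x"
    and "is_partition X Ct"
    and "stable S Ct"
    and "\<eta> > 1/2"
    and "avg_linkage_tree S X ms"
    and "is_partition X Cs0"
    and "(proc_step X ms Ct \<eta>)\<^sup>*\<^sup>* (Cs0, {}) (Cs, Pu)"
  shows "(\<forall>C N1 N2 Cs' Pu'. split_step X ms Ct Cs Pu C N1 N2 Cs' Pu' \<longrightarrow>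
            clean_split Ct C (C \<inter> N1) (C \<inter> N2))
       \<and> (\<forall>Ci Cj N Cs' Pu'. merge_step X ms Ct \<eta> Cs Pu Ci Cj N Cs' Pu' \<longrightarrow>
            N \<inter> (Ci \<union> Cj) \<noteq> {} \<and> (\<exists>T\<in>Ct. N \<inter> (Ci \<union> Cj) \<subseteq> T))"
proof -
  interpret laminar_linkage_tree X ms Ct
    by (rule avg_linkage_tree_laminar[OF assms(1-4,6)])
  have "sound_state Cs0 {}"
    using assms(7) unfolding sound_state_def is_partition_def by blast
  then have "sound_state Cs Pu"
    using proc_steps_sound[OF assms(5,8)] by simp
  then have clusters: "\<forall>C\<in>Cs. C \<noteq> {} \<and> C \<subseteq> X" and pure: "\<forall>C\<in>Pu. \<exists>T\<in>Ct. C \<subseteq> T"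
    unfolding sound_state_def by auto
  show ?thesis
    using split_step_clean merge_step_pure[OF assms(5) clusters pure] by blast
qed

end
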